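(* Let $D$ be an integral domain with quotient field $K$ and $n\ge1$. The set $\mathrm{Int}_{T_n(K)}(T_n(D))$ of right integer-valued polynomials and the set $\mathrm{Int}^{\ell}_{T_n(K)}(T_n(D))$ of left integer-valued polynomials on $T_n(D)$ with coefficients in $T_n(K)$ are subrings of $(T_n(K))[x]$.
   Context: $T_n(A)$ denotes the ring of upper triangular $n\times n$ matrices over a ring $A$; $(T_n(K))[x]$ is the polynomial ring in a central variable $x$ with coefficients in $T_n(K)$. For $f=\sum_k F_kx^k\in(T_n(K))[x]$ and $C\in T_n(K)$, right substitution is $f(C)=\sum_kF_kC^k$ and left substitution is $f(C)_\ell=\sum_kC^kF_k$. $\mathrm{Int}_{T_n(K)}(T_n(D))=\{f\in(T_n(K))[x]\mid\forall C\in T_n(D):\ f(C)\in T_n(D)\}$ and $\mathrm{Int}^{\ell}_{T_n(K)}(T_n(D))=\{f\in(T_n(K))[x]\mid\forall C\in T_n(D):\ f(C)_\ell\in T_n(D)\}$. *)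

theory Defs
  imports "Jordan_Normal_Form.Matrix" "HOL-Algebra.UnivPoly" "HOL-Algebra.Subrings"
begin

text \<open>D is a subring of the field 'k and 'k is its quotient field
  (every element of 'k is a quotient of elements of D). Being a subring of a
  field, D is an integral domain.\<close>
definition quotient_field_of :: "'k::field set \<Rightarrow> bool" where
  "quotient_field_of D \<longleftrightarrow>
     0 \<in> D \<and> 1 \<in> D \<and>
     (\<forall>a\<in>D. \<forall>b\<in>D. a + b \<in> D \<and> - a \<in> D \<and> a * b \<in> D) \<and>
     (\<forall>k. \<exists>a\<in>D. \<exists>b\<in>D. b \<noteq> 0 \<and> k = a / b)"

definition upper_tri_mats :: "nat \<Rightarrow> 'a::zero set \<Rightarrow> 'a mat set" where
  "upper_tri_mats n S = {A \<in> carrier_mat n n.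
      (\<forall>i<n. \<forall>j<n. A $$ (i, j) \<in> S) \<and> (\<forall>i<n. \<forall>j<i. A $$ (i, j) = 0)}"

definition Tn_ring :: "nat \<Rightarrow> 'a::comm_ring_1 mat ring" where
  "Tn_ring n = (ring_mat TYPE('a) n ()) \<lparr>carrier := upper_tri_mats n UNIV\<rparr>"

definition right_eval :: "('a, 'm) ring_scheme \<Rightarrow> (nat \<Rightarrow> 'a) \<Rightarrow> 'a \<Rightarrow> 'a" where
  "right_eval R f C = (\<Oplus>\<^bsub>R\<^esub> k\<in>{..deg R f}. f k \<otimes>\<^bsub>R\<^esub> C [^]\<^bsub>R\<^esub> k)"

definition left_eval :: "('a, 'm) ring_scheme \<Rightarrow> (nat \<Rightarrow> 'a) \<Rightarrow> 'a \<Rightarrow> 'a" where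
  "left_eval R f C = (\<Oplus>\<^bsub>R\<^esub> k\<in>{..deg R f}. C [^]\<^bsub>R\<^esub> k \<otimes>\<^bsub>R\<^esub> f k)"

definition Int_right :: "nat \<Rightarrow> 'k::field set \<Rightarrow> (nat \<Rightarrow> 'k mat) set" where
  "Int_right n D = {f \<in> carrier (UP (Tn_ring n)).
      \<forall>C \<in> upper_tri_mats n D. right_eval (Tn_ring n) f C \<in> upper_tri_mats n D}"

definition Int_left :: "nat \<Rightarrow> 'k::field set \<Rightarrow> (nat \<Rightarrow> 'k mat) set" where
  "Int_left n D = {f \<in> carrier (UP (Tn_ring n)).
      \<forall>C \<in> upper_tri_mats n D. left_eval (Tn_ring n) f C \<in> upper_tri_mats n D}"

end

theory Submission
  imports Defs
begin

(* Over a noncommutative coefficient ring right substitution is not multiplicative: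
   (p q)(C) = sum_k p_k q(C) C^k.  If q(C) is a sum of elements X of the subring S with
   X C = M X for some M in S, then sum_k p_k X C^k = p(M) X, which lies in S whenever p is
   integer-valued; hence integer-valued polynomials are closed under products.  In T_n(D)
   every matrix is such a sum: b E_ij is the difference of the shifted diagonals
   b sum_{r >= i} E_{r,r+j-i} and b sum_{r > i} E_{r,r+j-i}, and such a diagonal X satisfies
   X C = M X with M a copy of C shifted along the diagonal.  Left substitution is right
   substitution in the opposite ring, where the diagonals truncated from below
   (r <= i and r < i) play the same role. *)

section \<open>Substitution into polynomials over a noncommutative ring\<close>

lemma (in ring) finsum_atMost_extend:
  assumes "\<And>k. h k \<in> carrier R" and "\<And>k. d < k \<Longrightarrow> h k = \<zero>" and "d \<le> (N::nat)"
  shows "(\<Oplus>k\<in>{..N}. h k) = (\<Oplus>k\<in>{..d}. h k)"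
  using assms(3)
proof (induction N rule: dec_induct)
  case (step N)
  then show ?case using assms(1,2) by (simp add: Pi_def)
qed simp

lemma (in ring) diagonal_finsum:
  assumes "\<And>i j. F i j \<in> carrier R"
  shows "(\<Oplus>k\<in>{..N::nat}. \<Oplus>i\<in>{..k}. F i (k - i)) = (\<Oplus>i\<in>{..N}. \<Oplus>j\<in>{..N - i}. F i j)"
proof (induction N)
  case (Suc N)
  then show ?case by (simp cong: finsum_cong add: Suc_diff_le a_ac Pi_def assms)
qed (simp add: Pi_def assms)

lemma (in ring) finsum_subring_closed:
  assumes S: "subring S R" and "finite A" and "\<And>a. a \<in> A \<Longrightarrow> h a \<in> S"
  shows "finsum R h A \<in> S"
  using assms(2,3)
proof (induction A rule: finite_induct)
  case (insert a A)
  then show ?case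
    using subringE(1,7)[OF S] by (subst finsum_insert) (auto simp: Pi_def subset_iff)
qed (use subringE(2)[OF S] in simp)

definition right_eval_through :: "('a, 'm) ring_scheme \<Rightarrow> (nat \<Rightarrow> 'a) \<Rightarrow> 'a \<Rightarrow> 'a \<Rightarrow> 'a" where
  "right_eval_through R f X C = (\<Oplus>\<^bsub>R\<^esub> k\<in>{..deg R f}. f k \<otimes>\<^bsub>R\<^esub> X \<otimes>\<^bsub>R\<^esub> C [^]\<^bsub>R\<^esub> k)"

context UP_ring
begin

lemma coeff_UP_eq: "p \<in> carrier P \<Longrightarrow> coeff P p k = p k"
  by (simp add: P_def UP_def)

lemma UP_apply_closed: "p \<in> carrier P \<Longrightarrow> p k \<in> carrier R"
  using coeff_closed coeff_UP_eq by metis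

lemma UP_apply_above_deg: "p \<in> carrier P \<Longrightarrow> deg R p < k \<Longrightarrow> p k = \<zero>"
  using deg_aboveD coeff_UP_eq by metis

lemma UP_one_apply: "\<one>\<^bsub>P\<^esub> k = (if k = 0 then \<one> else \<zero>)"
  using coeff_one coeff_UP_eq[OF UP_one_closed] by metis

lemma UP_zero_apply: "\<zero>\<^bsub>P\<^esub> k = \<zero>"
  using coeff_zero coeff_UP_eq[OF UP_zero_closed] by metis

lemma UP_add_apply: "p \<in> carrier P \<Longrightarrow> q \<in> carrier P \<Longrightarrow> (p \<oplus>\<^bsub>P\<^esub> q) k = p k \<oplus> q k"
  using coeff_add coeff_UP_eq UP_a_closed by metis

lemma right_eval_atMost:
  assumes "p \<in> carrier P" and "C \<in> carrier R" and "deg R p \<le> N"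
  shows "right_eval R p C = (\<Oplus>k\<in>{..N}. p k \<otimes> C [^] k)"
  unfolding right_eval_def
  by (rule R.finsum_atMost_extend[symmetric]) (use assms in \<open>auto simp: UP_apply_closed UP_apply_above_deg\<close>)

lemma right_eval_through_atMost:
  assumes "p \<in> carrier P" and "X \<in> carrier R" and "C \<in> carrier R" and "deg R p \<le> N"
  shows "right_eval_through R p X C = (\<Oplus>k\<in>{..N}. p k \<otimes> X \<otimes> C [^] k)"
  unfolding right_eval_through_def
  by (rule R.finsum_atMost_extend[symmetric]) (use assms in \<open>auto simp: UP_apply_closed UP_apply_above_deg\<close>)

lemma right_eval_closed: "p \<in> carrier P \<Longrightarrow> C \<in> carrier R \<Longrightarrow> right_eval R p C \<in> carrier R"
  unfolding right_eval_def by (auto simp: UP_apply_closed)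

lemma right_eval_through_closed:
  "p \<in> carrier P \<Longrightarrow> X \<in> carrier R \<Longrightarrow> C \<in> carrier R \<Longrightarrow> right_eval_through R p X C \<in> carrier R"
  unfolding right_eval_through_def by (auto simp: UP_apply_closed)

lemma right_eval_one: "C \<in> carrier R \<Longrightarrow> right_eval R \<one>\<^bsub>P\<^esub> C = \<one>"
  by (simp add: right_eval_def UP_one_apply)

lemma right_eval_add:
  assumes p: "p \<in> carrier P" and q: "q \<in> carrier P" and C: "C \<in> carrier R"
  shows "right_eval R (p \<oplus>\<^bsub>P\<^esub> q) C = right_eval R p C \<oplus> right_eval R q C"
proof -
  let ?N = "max (deg R p) (deg R q)"
  have "right_eval R (p \<oplus>\<^bsub>P\<^esub> q) C = (\<Oplus>k\<in>{..?N}. (p k \<oplus> q k) \<otimes> C [^] k)"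
    using right_eval_atMost[of "p \<oplus>\<^bsub>P\<^esub> q" C ?N] p q C by (simp add: UP_add_apply)
  also have "\<dots> = (\<Oplus>k\<in>{..?N}. p k \<otimes> C [^] k) \<oplus> (\<Oplus>k\<in>{..?N}. q k \<otimes> C [^] k)"
    using p q C by (simp add: R.l_distr R.finsum_addf UP_apply_closed)
  also have "\<dots> = right_eval R p C \<oplus> right_eval R q C"
    using right_eval_atMost[OF p C, of ?N] right_eval_atMost[OF q C, of ?N] by simp
  finally show ?thesis .
qed

lemma right_eval_a_inv:
  assumes p: "p \<in> carrier P" and C: "C \<in> carrier R"
  shows "right_eval R (\<ominus>\<^bsub>P\<^esub> p) C = \<ominus> right_eval R p C"
proof -
  have "right_eval R (\<ominus>\<^bsub>P\<^esub> p) C \<oplus> right_eval R p C = right_eval R (\<ominus>\<^bsub>P\<^esub> p \<oplus>\<^bsub>P\<^esub> p) C"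
    using right_eval_add p C by simp
  also have "\<dots> = \<zero>"
    using p C by (simp add: right_eval_def UP_zero_apply P.l_neg)
  finally show ?thesis using R.minus_equality right_eval_closed p C by simp
qed

lemma right_eval_through_add:
  assumes p: "p \<in> carrier P" and X: "X \<in> carrier R" and Y: "Y \<in> carrier R" and C: "C \<in> carrier R"
  shows "right_eval_through R p (X \<oplus> Y) C = right_eval_through R p X C \<oplus> right_eval_through R p Y C"
  unfolding right_eval_through_def
  using assms by (simp add: R.l_distr R.r_distr R.finsum_addf UP_apply_closed)

lemma right_eval_through_finsum:
  assumes p: "p \<in> carrier P" and C: "C \<in> carrier R" and "finite A" and "h \<in> A \<rightarrow> carrier R"
  shows "right_eval_through R p (finsum R h A) C = (\<Oplus>a\<in>A. right_eval_through R p (h a) C)"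
  using assms(3,4)
proof (induction A rule: finite_induct)
  case empty
  then show ?case using p C by (simp add: right_eval_through_def UP_apply_closed)
next
  case (insert a A)
  then show ?case
    using p C by (simp add: R.finsum_insert right_eval_through_add right_eval_through_closed Pi_def)
qed

lemma right_eval_through_intertwining:
  assumes p: "p \<in> carrier P" and C: "C \<in> carrier R" and X: "X \<in> carrier R" and M: "M \<in> carrier R"
    and XC: "X \<otimes> C = M \<otimes> X"
  shows "right_eval_through R p X C = right_eval R p M \<otimes> X"
proof -
  have pow: "X \<otimes> C [^] k = M [^] k \<otimes> X" for k :: nat
  proof (induction k)
    case (Suc k)
    have "X \<otimes> C [^] Suc k = M [^] k \<otimes> (X \<otimes> C)"
      using Suc X C M by (simp flip: R.m_assoc)
    then show ?case using XC X C M by (simp add: R.m_assoc)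
  qed (use X in simp)
  have "right_eval_through R p X C = (\<Oplus>k\<in>{..deg R p}. p k \<otimes> M [^] k \<otimes> X)"
    unfolding right_eval_through_def
    by (rule R.finsum_cong') (use p X C M pow in \<open>auto simp: R.m_assoc UP_apply_closed\<close>)
  also have "\<dots> = right_eval R p M \<otimes> X"
    unfolding right_eval_def using p X M by (simp add: R.finsum_ldistr UP_apply_closed)
  finally show ?thesis .
qed

lemma UP_mult_apply: "p \<in> carrier P \<Longrightarrow> q \<in> carrier P \<Longrightarrow> (p \<otimes>\<^bsub>P\<^esub> q) k = (\<Oplus>i\<in>{..k}. p i \<otimes> q (k - i))"
  using coeff_mult[of p q k] by (simp add: coeff_UP_eq)

lemma right_eval_mult_diagonal:
  assumes p: "p \<in> carrier P" and q: "q \<in> carrier P" and C: "C \<in> carrier R"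
  defines "N \<equiv> deg R p + deg R q"
  shows "right_eval R (p \<otimes>\<^bsub>P\<^esub> q) C
    = (\<Oplus>i\<in>{..N}. \<Oplus>j\<in>{..N - i}. p i \<otimes> (q j \<otimes> C [^] j) \<otimes> C [^] i)"
proof -
  let ?F = "\<lambda>i j. p i \<otimes> (q j \<otimes> C [^] j) \<otimes> C [^] i"
  have F: "?F i j \<in> carrier R" for i j using p q C by (simp add: UP_apply_closed)
  have "right_eval R (p \<otimes>\<^bsub>P\<^esub> q) C = (\<Oplus>k\<in>{..N}. (\<Oplus>i\<in>{..k}. p i \<otimes> q (k - i)) \<otimes> C [^] k)"
    using right_eval_atMost[of "p \<otimes>\<^bsub>P\<^esub> q" C N] deg_mult_ring p q C by (simp add: N_def UP_mult_apply)
  also have "\<dots> = (\<Oplus>k\<in>{..N}. \<Oplus>i\<in>{..k}. ?F i (k - i))"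
  proof (rule R.finsum_cong')
    fix k :: nat
    have "(\<Oplus>i\<in>{..k}. p i \<otimes> q (k - i)) \<otimes> C [^] k = (\<Oplus>i\<in>{..k}. p i \<otimes> q (k - i) \<otimes> C [^] k)"
      using p q C by (simp add: R.finsum_ldistr UP_apply_closed)
    also have "\<dots> = (\<Oplus>i\<in>{..k}. ?F i (k - i))"
    proof (rule R.finsum_cong')
      fix i assume "i \<in> {..k}"
      then have "C [^] k = C [^] (k - i) \<otimes> C [^] i"
        using C R.nat_pow_mult[of C "k - i" i] by simp
      then show "p i \<otimes> q (k - i) \<otimes> C [^] k = ?F i (k - i)"
        using p q C by (simp add: R.m_assoc UP_apply_closed)
    qed (use F in auto)
    finally show "(\<Oplus>i\<in>{..k}. p i \<otimes> q (k - i)) \<otimes> C [^] k = (\<Oplus>i\<in>{..k}. ?F i (k - i))" .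
  qed (use F in auto)
  also have "\<dots> = (\<Oplus>i\<in>{..N}. \<Oplus>j\<in>{..N - i}. ?F i j)"
    by (rule R.diagonal_finsum[OF F])
  finally show ?thesis .
qed

lemma right_eval_mult:
  assumes p: "p \<in> carrier P" and q: "q \<in> carrier P" and C: "C \<in> carrier R"
  shows "right_eval R (p \<otimes>\<^bsub>P\<^esub> q) C = right_eval_through R p (right_eval R q C) C"
proof -
  let ?N = "deg R p + deg R q"
  have "right_eval R (p \<otimes>\<^bsub>P\<^esub> q) C
      = (\<Oplus>i\<in>{..?N}. \<Oplus>j\<in>{..?N - i}. p i \<otimes> (q j \<otimes> C [^] j) \<otimes> C [^] i)"
    by (rule right_eval_mult_diagonal[OF p q C])
  also have "\<dots> = (\<Oplus>i\<in>{..?N}. p i \<otimes> right_eval R q C \<otimes> C [^] i)"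
  proof (rule R.finsum_cong')
    fix i :: nat
    have "p i \<otimes> (\<Oplus>j\<in>{..?N - i}. q j \<otimes> C [^] j) = p i \<otimes> right_eval R q C"
    proof (cases "i \<le> deg R p")
      case True
      then show ?thesis using right_eval_atMost[OF q C, of "?N - i"] by simp
    next
      case False
      then show ?thesis using p q C by (simp add: UP_apply_above_deg UP_apply_closed right_eval_closed)
    qed
    moreover have "(\<Oplus>j\<in>{..?N - i}. p i \<otimes> (q j \<otimes> C [^] j) \<otimes> C [^] i)
        = p i \<otimes> (\<Oplus>j\<in>{..?N - i}. q j \<otimes> C [^] j) \<otimes> C [^] i"
      using p q C by (simp add: R.finsum_ldistr R.finsum_rdistr UP_apply_closed)
    ultimately show "(\<Oplus>j\<in>{..?N - i}. p i \<otimes> (q j \<otimes> C [^] j) \<otimes> C [^] i)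
        = p i \<otimes> right_eval R q C \<otimes> C [^] i"
      by simp
  qed (use p q C in \<open>auto simp: UP_apply_closed right_eval_closed\<close>)
  also have "\<dots> = right_eval_through R p (right_eval R q C) C"
    using right_eval_through_atMost[OF p right_eval_closed[OF q C] C, of ?N] by simp
  finally show ?thesis .
qed

lemma right_eval_mult_mem:
  assumes S: "subring S R" and p: "p \<in> carrier P" "\<forall>C\<in>S. right_eval R p C \<in> S"
    and q: "q \<in> carrier P" and C: "C \<in> S"
    and A: "finite A" and qC: "right_eval R q C = finsum R h A"
    and h: "\<And>a. a \<in> A \<Longrightarrow> h a \<in> S \<and> (\<exists>M\<in>S. h a \<otimes> C = M \<otimes> h a)"
  shows "right_eval R (p \<otimes>\<^bsub>P\<^esub> q) C \<in> S"
proof -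
  note S_sub = subringE(1)[OF S]
  have CR: "C \<in> carrier R" using C S_sub by blast
  have hR: "h \<in> A \<rightarrow> carrier R" using h S_sub by blast
  have "right_eval_through R p (h a) C \<in> S" if a: "a \<in> A" for a
  proof -
    obtain M where M: "M \<in> S" "h a \<otimes> C = M \<otimes> h a" using h[OF a] by blast
    have "right_eval_through R p (h a) C = right_eval R p M \<otimes> h a"
      using right_eval_through_intertwining[OF p(1) CR _ _ M(2)] hR a M(1) S_sub by blast
    moreover have "right_eval R p M \<in> S" using p(2) M(1) by blast
    ultimately show ?thesis using h[OF a] subringE(6)[OF S] by simp
  qed
  then have "(\<Oplus>a\<in>A. right_eval_through R p (h a) C) \<in> S"
    by (rule R.finsum_subring_closed[OF S A])
  moreover have "right_eval R (p \<otimes>\<^bsub>P\<^esub> q) C = (\<Oplus>a\<in>A. right_eval_through R p (h a) C)"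
    unfolding right_eval_mult[OF p(1) q CR] qC using p(1) CR A hR by (rule right_eval_through_finsum)
  ultimately show ?thesis by simp
qed

theorem subring_right_integer_valued:
  assumes S: "subring S R"
    and span: "\<And>B C. B \<in> S \<Longrightarrow> C \<in> S \<Longrightarrow> \<exists>(A :: 'i set) h. finite A \<and> B = finsum R h A \<and>
       (\<forall>a\<in>A. h a \<in> S \<and> (\<exists>M\<in>S. h a \<otimes> C = M \<otimes> h a))"
  shows "subring {f \<in> carrier P. \<forall>C\<in>S. right_eval R f C \<in> S} P"
proof (rule P.subringI)
  note S_sub = subringE(1)[OF S]
  show "\<one>\<^bsub>P\<^esub> \<in> {f \<in> carrier P. \<forall>C\<in>S. right_eval R f C \<in> S}"
    using S_sub subringE(3)[OF S] by (auto simp: right_eval_one)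
  fix p q assume p: "p \<in> {f \<in> carrier P. \<forall>C\<in>S. right_eval R f C \<in> S}"
    and q: "q \<in> {f \<in> carrier P. \<forall>C\<in>S. right_eval R f C \<in> S}"
  show "\<ominus>\<^bsub>P\<^esub> p \<in> {f \<in> carrier P. \<forall>C\<in>S. right_eval R f C \<in> S}"
    using p S_sub subringE(5)[OF S] by (auto simp: right_eval_a_inv simp del: coeff_a_inv)
  show "p \<oplus>\<^bsub>P\<^esub> q \<in> {f \<in> carrier P. \<forall>C\<in>S. right_eval R f C \<in> S}"
    using p q S_sub subringE(7)[OF S] by (auto simp: right_eval_add simp del: coeff_add)
  have pP: "p \<in> carrier P" "\<forall>C\<in>S. right_eval R p C \<in> S" and qP: "q \<in> carrier P"
    using p q by simp_all
  have mult: "right_eval R (p \<otimes>\<^bsub>P\<^esub> q) C \<in> S" if C: "C \<in> S" for C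
  proof -
    obtain A :: "'i set" and h where "finite A" and "right_eval R q C = finsum R h A"
      and "\<And>a. a \<in> A \<Longrightarrow> h a \<in> S \<and> (\<exists>M\<in>S. h a \<otimes> C = M \<otimes> h a)"
      using span[of "right_eval R q C" C] q C by blast
    then show ?thesis by (rule right_eval_mult_mem[OF S pP qP C])
  qed
  show "p \<otimes>\<^bsub>P\<^esub> q \<in> {f \<in> carrier P. \<forall>C\<in>S. right_eval R f C \<in> S}"
    using p q mult by simp
qed blast

end

section \<open>The opposite ring and left substitution\<close>

definition opposite_ring :: "('a, 'm) ring_scheme \<Rightarrow> ('a, 'm) ring_scheme" where
  "opposite_ring R = R\<lparr>mult := \<lambda>x y. y \<otimes>\<^bsub>R\<^esub> x\<rparr>"

lemma opposite_ring_simps [simp]: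
  "carrier (opposite_ring R) = carrier R"
  "x \<otimes>\<^bsub>opposite_ring R\<^esub> y = y \<otimes>\<^bsub>R\<^esub> x"
  "\<one>\<^bsub>opposite_ring R\<^esub> = \<one>\<^bsub>R\<^esub>"
  "\<zero>\<^bsub>opposite_ring R\<^esub> = \<zero>\<^bsub>R\<^esub>"
  "add (opposite_ring R) = add R"
  by (simp_all add: opposite_ring_def)

lemma finsum_opposite_ring [simp]: "finsum (opposite_ring R) = finsum R"
  by (simp add: finsum_def)

lemma up_opposite_ring [simp]: "up (opposite_ring R) = up R"
  by (simp add: up_def)

lemma deg_opposite_ring [simp]: "deg (opposite_ring R) = deg R"
  unfolding deg_def[abs_def] by (simp add: UP_def)

lemma UP_opposite_ring_simps [simp]:
  "carrier (UP (opposite_ring R)) = carrier (UP R)"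
  "\<one>\<^bsub>UP (opposite_ring R)\<^esub> = \<one>\<^bsub>UP R\<^esub>"
  "\<zero>\<^bsub>UP (opposite_ring R)\<^esub> = \<zero>\<^bsub>UP R\<^esub>"
  "add (UP (opposite_ring R)) = add (UP R)"
  by (simp_all add: UP_def cong: if_cong)

context ring
begin

lemma ring_opposite_ring: "ring (opposite_ring R)"
proof (rule ringI)
  show "abelian_group (opposite_ring R)"
    using is_abelian_group unfolding abelian_group_def abelian_monoid_def abelian_group_axioms_def
    by (simp add: opposite_ring_def)
  show "monoid (opposite_ring R)"
    by (rule monoidI) (auto simp: m_assoc)
qed (auto simp: l_distr r_distr)

lemma nat_pow_opposite_ring: "x \<in> carrier R \<Longrightarrow> x [^]\<^bsub>opposite_ring R\<^esub> (k::nat) = x [^] k"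
proof (induction k)
  case (Suc k)
  then show ?case using nat_pow_Suc2[of x k] by simp
qed simp

lemma subring_opposite_ring: "subring S R \<Longrightarrow> subring S (opposite_ring R)"
  using ring.subringI[OF ring_opposite_ring, of S] subringE[of S R] by (simp add: a_inv_def)

lemma finsum_atMost_reflect:
  assumes "\<And>i j. f i j \<in> carrier R"
  shows "(\<Oplus>i\<in>{..k::nat}. f (k - i) i) = (\<Oplus>i\<in>{..k}. f i (k - i))"
proof -
  have image: "(\<lambda>i. k - i) ` {..k} = {..k}"
  proof (intro equalityI subsetI)
    fix x assume "x \<in> {..k}"
    then show "x \<in> (\<lambda>i. k - i) ` {..k}" by (intro image_eqI[where x = "k - x"]) auto
  qed auto
  have "(\<Oplus>i\<in>{..k}. f i (k - i)) = (\<Oplus>i\<in>(\<lambda>i. k - i) ` {..k}. f i (k - i))"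
    by (simp only: image)
  also have "\<dots> = (\<Oplus>i\<in>{..k}. f (k - i) (k - (k - i)))"
    by (rule finsum_reindex) (use assms in \<open>auto simp: inj_on_def\<close>)
  also have "\<dots> = (\<Oplus>i\<in>{..k}. f (k - i) i)"
    by (rule finsum_cong') (use assms in auto)
  finally show ?thesis by (rule sym)
qed

end

context UP_ring
begin

lemma left_eval_eq_right_eval_opposite_ring:
  "C \<in> carrier R \<Longrightarrow> left_eval R f C = right_eval (opposite_ring R) f C"
  by (simp add: left_eval_def right_eval_def R.nat_pow_opposite_ring)

lemma UP_opposite_ring_mult:
  assumes p: "p \<in> carrier P" and q: "q \<in> carrier P"
  shows "p \<otimes>\<^bsub>UP (opposite_ring R)\<^esub> q = q \<otimes>\<^bsub>P\<^esub> p"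
proof
  fix k
  have "(p \<otimes>\<^bsub>UP (opposite_ring R)\<^esub> q) k = (\<Oplus>i\<in>{..k}. q (k - i) \<otimes> p i)"
    using p q by (simp add: P_def UP_def)
  also have "\<dots> = (\<Oplus>i\<in>{..k}. q i \<otimes> p (k - i))"
    using R.finsum_atMost_reflect[of "\<lambda>i j. q i \<otimes> p j" k] p q by (simp add: UP_apply_closed)
  finally show "(p \<otimes>\<^bsub>UP (opposite_ring R)\<^esub> q) k = (q \<otimes>\<^bsub>P\<^esub> p) k"
    using p q by (simp add: UP_mult_apply)
qed

lemma subring_UP_opposite_ring:
  assumes H: "subring H (UP (opposite_ring R))"
  shows "subring H P"
  using subringE[OF H] UP_opposite_ring_mult
  by (intro P.subringI) (auto simp: a_inv_def P_def subset_iff)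

theorem subring_left_integer_valued:
  assumes S: "subring S R"
    and span: "\<And>B C. B \<in> S \<Longrightarrow> C \<in> S \<Longrightarrow> \<exists>(A :: 'i set) h. finite A \<and> B = finsum R h A \<and>
       (\<forall>a\<in>A. h a \<in> S \<and> (\<exists>M\<in>S. C \<otimes> h a = h a \<otimes> M))"
  shows "subring {f \<in> carrier P. \<forall>C\<in>S. left_eval R f C \<in> S} P"
proof -
  interpret Op: UP_ring "opposite_ring R" "UP (opposite_ring R)"
    by (rule UP_ring.intro) (rule R.ring_opposite_ring)
  have "subring {f \<in> carrier (UP (opposite_ring R)). \<forall>C\<in>S. right_eval (opposite_ring R) f C \<in> S}
      (UP (opposite_ring R))"
    using R.subring_opposite_ring[OF S] span by (intro Op.subring_right_integer_valued) simp_all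
  then have "subring {f \<in> carrier (UP (opposite_ring R)). \<forall>C\<in>S. right_eval (opposite_ring R) f C \<in> S} P"
    by (rule subring_UP_opposite_ring)
  moreover have "right_eval (opposite_ring R) f C = left_eval R f C" if "C \<in> S" for f C
    using that subringE(1)[OF S] left_eval_eq_right_eval_opposite_ring by auto
  ultimately show ?thesis by (simp add: P_def)
qed

end

section \<open>Upper triangular matrices\<close>

lemma upper_tri_matsD:
  assumes "C \<in> upper_tri_mats n D"
  shows "C \<in> carrier_mat n n" and "\<And>r s. r < n \<Longrightarrow> s < n \<Longrightarrow> C $$ (r, s) \<in> D"
    and "\<And>r s. r < n \<Longrightarrow> s < r \<Longrightarrow> C $$ (r, s) = 0"
  using assms by (auto simp: upper_tri_mats_def)

lemma index_mult_mat_sum: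
  assumes "A \<in> carrier_mat n m" and "B \<in> carrier_mat m k" and "r < n" and "s < k"
  shows "(A * B) $$ (r, s) = (\<Sum>t\<in>{0..<m}. A $$ (r, t) * B $$ (t, s))"
  using assms by (simp add: scalar_prod_def)

lemma Tn_ring_simps [simp]:
  "carrier (Tn_ring n) = upper_tri_mats n UNIV"
  "mult (Tn_ring n) = (*)" "add (Tn_ring n) = (+)"
  "one (Tn_ring n) = 1\<^sub>m n" "zero (Tn_ring n) = 0\<^sub>m n n"
  unfolding Tn_ring_def ring_mat_def by simp_all

locale ring_closed_set =
  fixes D :: "'a::comm_ring_1 set"
  assumes one_mem: "1 \<in> D"
    and diff_mem: "a \<in> D \<Longrightarrow> b \<in> D \<Longrightarrow> a - b \<in> D"
    and mult_mem: "a \<in> D \<Longrightarrow> b \<in> D \<Longrightarrow> a * b \<in> D"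
begin

lemma zero_mem: "0 \<in> D"
  using diff_mem[OF one_mem one_mem] by simp

lemma uminus_mem: "a \<in> D \<Longrightarrow> - a \<in> D"
  using diff_mem[OF zero_mem] by fastforce

lemma add_mem: "a \<in> D \<Longrightarrow> b \<in> D \<Longrightarrow> a + b \<in> D"
  using diff_mem[OF _ uminus_mem] by fastforce

lemma sum_mem: "finite A \<Longrightarrow> (\<And>x. x \<in> A \<Longrightarrow> f x \<in> D) \<Longrightarrow> sum f A \<in> D"
  by (induction A rule: finite_induct) (auto intro: zero_mem add_mem)

lemma subring_upper_tri_mats: "subring (upper_tri_mats n D) (ring_mat TYPE('a) n ())"
proof (rule ring.subringI[OF ring_mat])
  show "upper_tri_mats n D \<subseteq> carrier (ring_mat TYPE('a) n ())"
    by (auto simp: upper_tri_mats_def ring_mat_simps)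
  show "\<one>\<^bsub>ring_mat TYPE('a) n ()\<^esub> \<in> upper_tri_mats n D"
    by (auto simp: upper_tri_mats_def ring_mat_simps one_mem zero_mem)
  fix A B assume A: "A \<in> upper_tri_mats n D" and B: "B \<in> upper_tri_mats n D"
  note A' = upper_tri_matsD[OF A] and B' = upper_tri_matsD[OF B]
  have "\<ominus>\<^bsub>ring_mat TYPE('a) n ()\<^esub> A = - A"
    using A'(1) by (intro abelian_group.minus_equality[OF ring.is_abelian_group[OF ring_mat]])
      (auto simp: ring_mat_simps)
  then show "\<ominus>\<^bsub>ring_mat TYPE('a) n ()\<^esub> A \<in> upper_tri_mats n D"
    using A' by (auto simp: upper_tri_mats_def uminus_mem)
  show "A \<oplus>\<^bsub>ring_mat TYPE('a) n ()\<^esub> B \<in> upper_tri_mats n D"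
    using A' B' by (auto simp: upper_tri_mats_def ring_mat_simps add_mem)
  have "(A * B) $$ (r, s) \<in> D" if "r < n" "s < n" for r s
    unfolding index_mult_mat_sum[OF A'(1) B'(1) that] using that A' B' by (auto intro!: sum_mem mult_mem)
  moreover have "(A * B) $$ (r, s) = 0" if "r < n" "s < r" for r s
    unfolding index_mult_mat_sum[OF A'(1) B'(1) that(1) less_trans[OF that(2,1)]] using that A' B'
  proof (intro sum.neutral ballI)
    fix t assume "t \<in> {0..<n}"
    then show "A $$ (r, t) * B $$ (t, s) = 0"
      using that A'(3)[of r t] B'(3)[of t s] by (cases "t < r") auto
  qed
  ultimately show "A \<otimes>\<^bsub>ring_mat TYPE('a) n ()\<^esub> B \<in> upper_tri_mats n D"
    using A' B' by (auto simp: upper_tri_mats_def ring_mat_simps)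
qed

end

lemma ring_closed_set_UNIV: "ring_closed_set UNIV"
  by unfold_locales auto

lemma quotient_field_of_imp_ring_closed_set:
  assumes "quotient_field_of D"
  shows "ring_closed_set D"
proof
  show "1 \<in> D"
    using assms unfolding quotient_field_of_def by (rule conjunct1[OF conjunct2])
  have closed: "\<forall>a\<in>D. \<forall>b\<in>D. a + b \<in> D \<and> - a \<in> D \<and> a * b \<in> D"
    using assms unfolding quotient_field_of_def by (rule conjunct1[OF conjunct2[OF conjunct2]])
  fix a b assume a: "a \<in> D" and b: "b \<in> D"
  show "a - b \<in> D"
    unfolding diff_conv_add_uminus using closed a b by blast
  show "a * b \<in> D"
    using closed a b by blast
qed

lemma ring_Tn_ring: "ring (Tn_ring n)"
  unfolding Tn_ring_def
  by (rule ring.subring_is_ring[OF ring_mat ring_closed_set.subring_upper_tri_mats[OF ring_closed_set_UNIV]])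

lemma (in ring_closed_set) subring_Tn_ring: "subring (upper_tri_mats n D) (Tn_ring n)"
proof -
  have sub: "upper_tri_mats n D \<subseteq> upper_tri_mats n UNIV"
    by (auto simp: upper_tri_mats_def)
  have "ring ((ring_mat TYPE('a) n ())\<lparr>carrier := upper_tri_mats n D\<rparr>)"
    by (rule ring.subring_is_ring[OF ring_mat subring_upper_tri_mats])
  then show ?thesis
    using ring.subring_iff[OF ring_Tn_ring, of "upper_tri_mats n D" n] sub by (simp add: Tn_ring_def)
qed

lemma index_finsum_Tn_ring:
  assumes "finite A" and "h \<in> A \<rightarrow> carrier (Tn_ring n)" and "r < n" and "s < n"
  shows "finsum (Tn_ring n) h A $$ (r, s) = (\<Sum>a\<in>A. h a $$ (r, s))"
proof -
  interpret Tn: ring "Tn_ring n" by (rule ring_Tn_ring)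
  show ?thesis
    using assms(1,2)
  proof (induction A rule: finite_induct)
    case (insert a A)
    then have "finsum (Tn_ring n) h A \<in> carrier_mat n n"
      using Tn.finsum_closed[of h A] by (auto simp: upper_tri_mats_def)
    then show ?case
      using insert assms(3,4) by simp
  qed (use assms(3,4) in simp)
qed

section \<open>Shifted diagonals\<close>

definition shift_mat :: "nat \<Rightarrow> nat set \<Rightarrow> nat \<Rightarrow> 'a::comm_ring_1 \<Rightarrow> 'a mat" where
  "shift_mat n I d b = mat n n (\<lambda>(r, s). if r \<in> I \<and> s = r + d then b else 0)"

lemma shift_mat_carrier [simp]: "shift_mat n I d b \<in> carrier_mat n n"
  and dim_shift_mat [simp]: "dim_row (shift_mat n I d b) = n" "dim_col (shift_mat n I d b) = n"
  by (simp_all add: shift_mat_def)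

lemma index_shift_mat [simp]:
  "r < n \<Longrightarrow> s < n \<Longrightarrow> shift_mat n I d b $$ (r, s) = (if r \<in> I \<and> s = r + d then b else 0)"
  by (simp add: shift_mat_def)

lemma index_shift_mat_mult:
  assumes "A \<in> carrier_mat n n" and "r < n" and "s < n"
  shows "(shift_mat n I d b * A) $$ (r, s) = (if r \<in> I \<and> r + d < n then b * A $$ (r + d, s) else 0)"
proof -
  have "(shift_mat n I d b * A) $$ (r, s) = (\<Sum>t\<in>{0..<n}. shift_mat n I d b $$ (r, t) * A $$ (t, s))"
    using assms by (intro index_mult_mat_sum) auto
  also have "\<dots> = (\<Sum>t\<in>{0..<n}. if t = r + d then (if r \<in> I then b * A $$ (t, s) else 0) else 0)"
    using assms by (intro sum.cong) auto
  finally show ?thesis by simp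
qed

lemma index_mult_shift_mat:
  assumes "A \<in> carrier_mat n n" and "r < n" and "s < n"
  shows "(A * shift_mat n I d b) $$ (r, s) = (if d \<le> s \<and> s - d \<in> I then A $$ (r, s - d) * b else 0)"
proof -
  have "(A * shift_mat n I d b) $$ (r, s) = (\<Sum>t\<in>{0..<n}. A $$ (r, t) * shift_mat n I d b $$ (t, s))"
    using assms by (intro index_mult_mat_sum) auto
  also have "\<dots> = (\<Sum>t\<in>{0..<n}. if t = s - d then (if d \<le> s \<and> t \<in> I then A $$ (r, t) * b else 0) else 0)"
    using assms by (intro sum.cong) auto
  finally show ?thesis using assms(3) by (simp add: less_imp_diff_less)
qed

definition shift_up :: "nat \<Rightarrow> nat \<Rightarrow> nat \<Rightarrow> 'a::comm_ring_1 mat \<Rightarrow> 'a mat" where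
  "shift_up n i d C = mat n n (\<lambda>(r, s). if i \<le> r \<and> r + d < n \<and> s + d < n then C $$ (r + d, s + d) else 0)"

definition shift_down :: "nat \<Rightarrow> nat \<Rightarrow> nat \<Rightarrow> 'a::comm_ring_1 mat \<Rightarrow> 'a mat" where
  "shift_down n i d C = mat n n (\<lambda>(r, s). if d \<le> r \<and> d \<le> s \<and> s < i + d then C $$ (r - d, s - d) else 0)"

lemma shift_up_carrier [simp]: "shift_up n i d C \<in> carrier_mat n n"
  and shift_down_carrier [simp]: "shift_down n i d C \<in> carrier_mat n n"
  by (simp_all add: shift_up_def shift_down_def)

lemma shift_mat_mult_eq_shift_up_mult:
  assumes C: "C \<in> upper_tri_mats n D"
  shows "shift_mat n {i..} d b * C = shift_up n i d C * shift_mat n {i..} d b"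
proof (rule eq_matI)
  fix r s assume "r < dim_row (shift_up n i d C * shift_mat n {i..} d b)"
    and "s < dim_col (shift_up n i d C * shift_mat n {i..} d b)"
  then have rs: "r < n" "s < n" by (auto simp: shift_up_def)
  have lhs: "(shift_mat n {i..} d b * C) $$ (r, s)
      = (if r \<in> {i..} \<and> r + d < n then b * C $$ (r + d, s) else 0)"
    by (rule index_shift_mat_mult[OF upper_tri_matsD(1)[OF C] rs])
  have rhs: "(shift_up n i d C * shift_mat n {i..} d b) $$ (r, s)
      = (if d \<le> s \<and> s - d \<in> {i..} then shift_up n i d C $$ (r, s - d) * b else 0)"
    by (rule index_mult_shift_mat[OF shift_up_carrier rs])
  show "(shift_mat n {i..} d b * C) $$ (r, s) = (shift_up n i d C * shift_mat n {i..} d b) $$ (r, s)"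
    unfolding lhs rhs using rs upper_tri_matsD(3)[OF C, of "r + d" s]
    by (auto simp: shift_up_def mult.commute)
qed (use upper_tri_matsD(1)[OF C] in \<open>auto simp: shift_up_def\<close>)

lemma mult_shift_mat_eq_shift_mat_mult:
  assumes C: "C \<in> upper_tri_mats n D"
  shows "C * shift_mat n {..<i} d b = shift_mat n {..<i} d b * shift_down n i d C"
proof (rule eq_matI)
  fix r s assume "r < dim_row (shift_mat n {..<i} d b * shift_down n i d C)"
    and "s < dim_col (shift_mat n {..<i} d b * shift_down n i d C)"
  then have rs: "r < n" "s < n" by (auto simp: shift_down_def)
  have lhs: "(C * shift_mat n {..<i} d b) $$ (r, s)
      = (if d \<le> s \<and> s - d \<in> {..<i} then C $$ (r, s - d) * b else 0)"
    by (rule index_mult_shift_mat[OF upper_tri_matsD(1)[OF C] rs])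
  have rhs: "(shift_mat n {..<i} d b * shift_down n i d C) $$ (r, s)
      = (if r \<in> {..<i} \<and> r + d < n then b * shift_down n i d C $$ (r + d, s) else 0)"
    by (rule index_shift_mat_mult[OF shift_down_carrier rs])
  show "(C * shift_mat n {..<i} d b) $$ (r, s) = (shift_mat n {..<i} d b * shift_down n i d C) $$ (r, s)"
    unfolding lhs rhs using rs upper_tri_matsD(3)[OF C, of r "s - d"]
    by (auto simp: shift_down_def mult.commute)
qed (use upper_tri_matsD(1)[OF C] in \<open>auto simp: shift_down_def\<close>)

lemma shift_mat_in_upper_tri_mats: "0 \<in> D \<Longrightarrow> b \<in> D \<Longrightarrow> shift_mat n I d b \<in> upper_tri_mats n D"
  by (auto simp: upper_tri_mats_def shift_mat_def)

lemma shift_up_in_upper_tri_mats: "0 \<in> D \<Longrightarrow> C \<in> upper_tri_mats n D \<Longrightarrow> shift_up n i d C \<in> upper_tri_mats n D"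
  by (auto simp: upper_tri_mats_def shift_up_def)

lemma shift_down_in_upper_tri_mats: "0 \<in> D \<Longrightarrow> C \<in> upper_tri_mats n D \<Longrightarrow> shift_down n i d C \<in> upper_tri_mats n D"
  by (auto simp: upper_tri_mats_def shift_down_def)

(* b E_ij = shift_mat n (I i) (j - i) b - shift_mat n (J i) (j - i) b; the Boolean index selects the
   two terms, the second carrying the sign. *)
lemma upper_tri_mat_eq_finsum_shift_mat:
  fixes B :: "'a::comm_ring_1 mat"
  assumes B: "B \<in> upper_tri_mats n UNIV" and I: "\<And>i. I i = insert i (J i)" and J: "\<And>i. i \<notin> J i"
  defines "h \<equiv> \<lambda>((i, j), \<epsilon>). if \<epsilon> then shift_mat n (I i) (j - i) (B $$ (i, j))
                              else shift_mat n (J i) (j - i) (- B $$ (i, j))"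
  shows "B = finsum (Tn_ring n) h ({(i, j). i \<le> j \<and> j < n} \<times> UNIV)"
proof -
  interpret Tn: ring "Tn_ring n" by (rule ring_Tn_ring)
  let ?P = "{(i, j). i \<le> j \<and> j < n}"
  have P: "finite ?P"
    by (rule finite_subset[of _ "{..<n} \<times> {..<n}"]) auto
  have h: "h \<in> ?P \<times> UNIV \<rightarrow> carrier (Tn_ring n)"
    by (auto simp: h_def shift_mat_in_upper_tri_mats)
  have entry: "(\<Sum>\<epsilon>\<in>UNIV. h ((i, j), \<epsilon>) $$ (r, s)) = (if (i, j) = (r, s) then B $$ (i, j) else 0)"
    if "(i, j) \<in> ?P" "r < n" "s < n" for i j r s
    using that I[of i] J[of i] by (auto simp: h_def UNIV_bool)
  show ?thesis
  proof (rule eq_matI)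
    fix r s assume "r < dim_row (finsum (Tn_ring n) h (?P \<times> UNIV))" "s < dim_col (finsum (Tn_ring n) h (?P \<times> UNIV))"
    then have rs: "r < n" "s < n"
      using Tn.finsum_closed[OF h] by (auto simp: upper_tri_mats_def)
    have "finsum (Tn_ring n) h (?P \<times> UNIV) $$ (r, s) = (\<Sum>x\<in>?P \<times> UNIV. h x $$ (r, s))"
      using P h rs by (simp add: index_finsum_Tn_ring)
    also have "\<dots> = (\<Sum>a\<in>?P. \<Sum>\<epsilon>\<in>UNIV. h (a, \<epsilon>) $$ (r, s))"
      by (simp add: sum.cartesian_product)
    also have "\<dots> = (\<Sum>a\<in>?P. if a = (r, s) then B $$ a else 0)"
    proof (rule sum.cong[OF refl])
      fix a assume "a \<in> ?P"
      then show "(\<Sum>\<epsilon>\<in>UNIV. h (a, \<epsilon>) $$ (r, s)) = (if a = (r, s) then B $$ a else 0)"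
        using entry[of "fst a" "snd a" r s] rs by (cases a) simp
    qed
    also have "\<dots> = B $$ (r, s)"
      using P rs upper_tri_matsD(3)[OF B, of r s] by auto
    finally show "B $$ (r, s) = finsum (Tn_ring n) h (?P \<times> UNIV) $$ (r, s)" by simp
  qed (use B Tn.finsum_closed[OF h] in \<open>auto simp: upper_tri_mats_def\<close>)
qed

context ring_closed_set
begin

lemma upper_tri_mat_sum_of_right_intertwiners:
  assumes B: "B \<in> upper_tri_mats n D" and C: "C \<in> upper_tri_mats n D"
  shows "\<exists>(A :: ((nat \<times> nat) \<times> bool) set) h. finite A \<and> B = finsum (Tn_ring n) h A \<and>
           (\<forall>a\<in>A. h a \<in> upper_tri_mats n D \<and>
              (\<exists>M\<in>upper_tri_mats n D. h a \<otimes>\<^bsub>Tn_ring n\<^esub> C = M \<otimes>\<^bsub>Tn_ring n\<^esub> h a))"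
proof (intro exI conjI ballI)
  let ?P = "{(i, j). i \<le> j \<and> j < n}"
  let ?h = "\<lambda>((i, j), \<epsilon>). if \<epsilon> then shift_mat n {i..} (j - i) (B $$ (i, j))
                          else shift_mat n {Suc i..} (j - i) (- B $$ (i, j))"
  show "finite (?P \<times> (UNIV :: bool set))"
    by (rule finite_cartesian_product, rule finite_subset[of _ "{..<n} \<times> {..<n}"]) auto
  have "B \<in> upper_tri_mats n UNIV" using B by (auto simp: upper_tri_mats_def)
  then show "B = finsum (Tn_ring n) ?h (?P \<times> UNIV)"
    by (rule upper_tri_mat_eq_finsum_shift_mat[where I = "\<lambda>i. {i..}" and J = "\<lambda>i. {Suc i..}"]) auto
  fix a assume "a \<in> ?P \<times> (UNIV :: bool set)"
  then obtain i j \<epsilon> where a: "a = ((i, j), \<epsilon>)" "i \<le> j" "j < n" by auto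
  let ?k = "if \<epsilon> then i else Suc i" and ?c = "if \<epsilon> then B $$ (i, j) else - B $$ (i, j)"
  have h: "?h a = shift_mat n {?k..} (j - i) ?c" by (simp add: a)
  have "?c \<in> D" using a upper_tri_matsD(2)[OF B, of i j] uminus_mem by simp
  then show "?h a \<in> upper_tri_mats n D"
    unfolding h using zero_mem by (intro shift_mat_in_upper_tri_mats)
  show "\<exists>M\<in>upper_tri_mats n D. ?h a \<otimes>\<^bsub>Tn_ring n\<^esub> C = M \<otimes>\<^bsub>Tn_ring n\<^esub> ?h a"
  proof
    show "shift_up n ?k (j - i) C \<in> upper_tri_mats n D"
      using zero_mem C by (rule shift_up_in_upper_tri_mats)
    show "?h a \<otimes>\<^bsub>Tn_ring n\<^esub> C = shift_up n ?k (j - i) C \<otimes>\<^bsub>Tn_ring n\<^esub> ?h a"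
      unfolding h Tn_ring_simps by (rule shift_mat_mult_eq_shift_up_mult[OF C])
  qed
qed

lemma upper_tri_mat_sum_of_left_intertwiners:
  assumes B: "B \<in> upper_tri_mats n D" and C: "C \<in> upper_tri_mats n D"
  shows "\<exists>(A :: ((nat \<times> nat) \<times> bool) set) h. finite A \<and> B = finsum (Tn_ring n) h A \<and>
           (\<forall>a\<in>A. h a \<in> upper_tri_mats n D \<and>
              (\<exists>M\<in>upper_tri_mats n D. C \<otimes>\<^bsub>Tn_ring n\<^esub> h a = h a \<otimes>\<^bsub>Tn_ring n\<^esub> M))"
proof (intro exI conjI ballI)
  let ?P = "{(i, j). i \<le> j \<and> j < n}"
  let ?h = "\<lambda>((i, j), \<epsilon>). if \<epsilon> then shift_mat n {..<Suc i} (j - i) (B $$ (i, j))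
                          else shift_mat n {..<i} (j - i) (- B $$ (i, j))"
  show "finite (?P \<times> (UNIV :: bool set))"
    by (rule finite_cartesian_product, rule finite_subset[of _ "{..<n} \<times> {..<n}"]) auto
  have "B \<in> upper_tri_mats n UNIV" using B by (auto simp: upper_tri_mats_def)
  then show "B = finsum (Tn_ring n) ?h (?P \<times> UNIV)"
    by (rule upper_tri_mat_eq_finsum_shift_mat[where I = "\<lambda>i. {..<Suc i}" and J = "\<lambda>i. {..<i}"]) auto
  fix a assume "a \<in> ?P \<times> (UNIV :: bool set)"
  then obtain i j \<epsilon> where a: "a = ((i, j), \<epsilon>)" "i \<le> j" "j < n" by auto
  let ?k = "if \<epsilon> then Suc i else i" and ?c = "if \<epsilon> then B $$ (i, j) else - B $$ (i, j)"
  have h: "?h a = shift_mat n {..<?k} (j - i) ?c" by (simp add: a)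
  have "?c \<in> D" using a upper_tri_matsD(2)[OF B, of i j] uminus_mem by simp
  then show "?h a \<in> upper_tri_mats n D"
    unfolding h using zero_mem by (intro shift_mat_in_upper_tri_mats)
  show "\<exists>M\<in>upper_tri_mats n D. C \<otimes>\<^bsub>Tn_ring n\<^esub> ?h a = ?h a \<otimes>\<^bsub>Tn_ring n\<^esub> M"
  proof
    show "shift_down n ?k (j - i) C \<in> upper_tri_mats n D"
      using zero_mem C by (rule shift_down_in_upper_tri_mats)
    show "C \<otimes>\<^bsub>Tn_ring n\<^esub> ?h a = ?h a \<otimes>\<^bsub>Tn_ring n\<^esub> shift_down n ?k (j - i) C"
      unfolding h Tn_ring_simps by (rule mult_shift_mat_eq_shift_mat_mult[OF C])
  qed
qed

end

theorem theorem5p4: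
  fixes D :: "'k::field set" and n :: nat
  assumes "quotient_field_of D" and "n \<ge> 1"
  shows "subring (Int_right n D) (UP (Tn_ring n :: 'k mat ring))
       \<and> subring (Int_left n D) (UP (Tn_ring n :: 'k mat ring))"
proof -
  interpret ring_closed_set D
    using assms(1) by (rule quotient_field_of_imp_ring_closed_set)
  interpret UP_ring "Tn_ring n :: 'k mat ring" "UP (Tn_ring n)"
    by (rule UP_ring.intro, rule ring_Tn_ring)
  have "subring (Int_right n D) (UP (Tn_ring n))"
    unfolding Int_right_def
    by (rule subring_right_integer_valued[OF subring_Tn_ring upper_tri_mat_sum_of_right_intertwiners])
  moreover have "subring (Int_left n D) (UP (Tn_ring n))"
    unfolding Int_left_def
    by (rule subring_left_integer_valued[OF subring_Tn_ring upper_tri_mat_sum_of_left_intertwiners])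
  ultimately show ?thesis ..
qed

end
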